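(* Let $G\subset\mathbb{R}^n$ be a compact set of positive Lebesgue measure with empty interior, and let $w_G(x)=1$ for $x\in G$ and $w_G(x)=2$ for $x\in\mathbb{R}^n\setminus G$. Then the Banach function space $L^\infty(\mathbb{R}^n,w_G)$ does not satisfy the bounded $L^2$-approximation property.
   Context: $L^\infty(\mathbb{R}^n,w)$ is the space of measurable $f$ with $\|f\|_{L^\infty(\mathbb{R}^n,w)}:=\|fw\|_{L^\infty(\mathbb{R}^n)}<\infty$. A Banach function space $X$ of functions on $\mathbb{R}^n$ has the bounded $L^2$-approximation property if for every $u\in L^2(\mathbb{R}^n)\cap X$ there is a sequence $u_j\in C_0^\infty(\mathbb{R}^n)$ with $\|u-u_j\|_{L^2(\mathbb{R}^n)}\to0$ and $\limsup_j\|u_j\|_X\le\|u\|_X$. *)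

theory Defs
  imports "HOL-Analysis.Analysis" "HOL-Probability.Essential_Supremum"
begin

text \<open>Infinitely (Frechet) differentiable real-valued functions on a Euclidean space:
  f is differentiable everywhere and every directional derivative is again smooth.\<close>
coinductive smooth_fun :: "('a::euclidean_space \<Rightarrow> real) \<Rightarrow> bool" where
  "(\<forall>x. f differentiable (at x)) \<Longrightarrow>
   (\<forall>v. smooth_fun (\<lambda>x. frechet_derivative f (at x) v)) \<Longrightarrow> smooth_fun f"

definition C0_infty :: "('a::euclidean_space \<Rightarrow> real) set" where
  "C0_infty = {f. smooth_fun f \<and> compact (closure {x. f x \<noteq> 0})}"

text \<open>L^2 membership and L^2 norm (used only for functions in L^2, where the integral is finite).\<close>
definition L2_space :: "('a::euclidean_space \<Rightarrow> real) set" where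
  "L2_space = {f. f \<in> borel_measurable lebesgue \<and>
                  (\<integral>\<^sup>+ x. ennreal ((f x)\<^sup>2) \<partial>lebesgue) < \<infinity>}"

definition L2_norm :: "('a::euclidean_space \<Rightarrow> real) \<Rightarrow> real" where
  "L2_norm f = sqrt (enn2real (\<integral>\<^sup>+ x. ennreal ((f x)\<^sup>2) \<partial>lebesgue))"

definition Linf_w_norm :: "('a::euclidean_space \<Rightarrow> real) \<Rightarrow> ('a \<Rightarrow> real) \<Rightarrow> ereal" where
  "Linf_w_norm w f = esssup lebesgue (\<lambda>x. ereal \<bar>f x * w x\<bar>)"

definition Linf_w :: "('a::euclidean_space \<Rightarrow> real) \<Rightarrow> ('a \<Rightarrow> real) set" where
  "Linf_w w = {f. f \<in> borel_measurable lebesgue \<and> Linf_w_norm w f < \<infinity>}"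

definition bounded_L2_approx ::
  "('a::euclidean_space \<Rightarrow> real) set \<Rightarrow> (('a \<Rightarrow> real) \<Rightarrow> ereal) \<Rightarrow> bool" where
  "bounded_L2_approx X nX \<longleftrightarrow>
     (\<forall>u \<in> L2_space \<inter> X. \<exists>uj :: nat \<Rightarrow> 'a \<Rightarrow> real.
        (\<forall>j. uj j \<in> C0_infty) \<and>
        ((\<lambda>j. L2_norm (\<lambda>x. u x - uj j x)) \<longlonglongrightarrow> 0) \<and>
        limsup (\<lambda>j. nX (uj j)) \<le> nX u)"

end

theory Submission imports Defs begin

text \<open>
  The indicator u of G has weighted norm 1. Any smooth v with weighted norm below 3/2 satisfies
  |v| \<le> 3/4 almost everywhere off G; since v is continuous and nonempty open sets are not null,
  this holds on all of -G, and since G has empty interior, -G is dense, so |v| \<le> 3/4 everywhere.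
  Hence |u - v| \<ge> 1/4 on G, so v stays at L2 distance at least sqrt |G| / 4 from u, and no
  smooth sequence converging to u in L2 can have weighted norms with limsup at most 1.
\<close>

lemma smooth_fun_imp_continuous: "smooth_fun f \<Longrightarrow> continuous_on UNIV f"
  by (erule smooth_fun.cases)
    (auto intro!: continuous_at_imp_continuous_on differentiable_imp_continuous_within)

lemma continuous_imp_borel_measurable_lebesgue:
  fixes f :: "'a::euclidean_space \<Rightarrow> real"
  shows "continuous_on UNIV f \<Longrightarrow> f \<in> borel_measurable lebesgue"
  by (metis measurable_lborel2 borel_measurable_continuous_onI measurable_completion)

lemma AE_le_imp_le_on_open:
  fixes f :: "'a::euclidean_space \<Rightarrow> real"
  assumes "open S" "continuous_on S f" "AE x in lebesgue. x \<in> S \<longrightarrow> f x \<le> b" "x \<in> S"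
  shows "f x \<le> b"
proof (rule ccontr)
  assume "\<not> f x \<le> b"
  obtain A where A: "open A" "A \<inter> S = {y \<in> S. b < f y}"
    using open_Collect_less_Int[OF continuous_on_const assms(2)] by blast
  define T where "T = A \<inter> S"
  have "open T"
    using A(1) assms(1) by (simp add: T_def open_Int)
  have "x \<in> T"
    using A(2) assms(4) \<open>\<not> f x \<le> b\<close> by (auto simp: T_def)
  have "AE y in lebesgue. y \<notin> T"
    using assms(3) by eventually_elim (use A in \<open>auto simp: T_def\<close>)
  then have "T \<in> null_sets lebesgue"
    using \<open>open T\<close> by (simp add: AE_iff_null_sets borel_open)
  then show False
    using open_not_negligible[OF \<open>open T\<close>] \<open>x \<in> T\<close> negligible_iff_null_sets by blast
qed

lemma AE_le_off_nowhere_dense_imp_le: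
  fixes f :: "'a::euclidean_space \<Rightarrow> real"
  assumes "closed G" "interior G = {}" "continuous_on UNIV f"
    and "AE x in lebesgue. x \<notin> G \<longrightarrow> f x \<le> b"
  shows "f x \<le> b"
proof (rule continuous_le_on_closure[of "- G"])
  have "closure (- G) = UNIV"
    using assms(2) by (simp add: closure_complement)
  then show "continuous_on (closure (- G)) f" "x \<in> closure (- G)"
    using assms(3) by auto
  show "f y \<le> b" if "y \<in> - G" for y
    using AE_le_imp_le_on_open[of "- G" f b y] assms(1,3,4) that
    by (auto simp: open_Compl continuous_on_subset)
qed

lemma AE_le_Linf_w_norm:
  "Linf_w_norm w f \<le> ereal c \<Longrightarrow> AE x in lebesgue. \<bar>f x * w x\<bar> \<le> c"
  using esssup_AE[of "\<lambda>x. ereal \<bar>f x * w x\<bar>" lebesgue]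
  by (auto simp: Linf_w_norm_def elim!: eventually_mono dest: order.trans)

lemma Linf_w_norm_le:
  assumes "f \<in> borel_measurable lebesgue" "w \<in> borel_measurable lebesgue" "\<And>x. \<bar>f x * w x\<bar> \<le> c"
  shows "Linf_w_norm w f \<le> ereal c"
  unfolding Linf_w_norm_def using assms by (intro esssup_I) auto

lemma L2_space_if_bounded_finite_support:
  assumes "f \<in> borel_measurable lebesgue" "\<And>x. \<bar>f x\<bar> \<le> B"
    and "{x. f x \<noteq> 0} \<subseteq> S" "S \<in> lmeasurable"
  shows "f \<in> L2_space"
proof -
  have "(\<integral>\<^sup>+x. ennreal ((f x)\<^sup>2) \<partial>lebesgue) \<le> (\<integral>\<^sup>+x. ennreal (B\<^sup>2) * indicator S x \<partial>lebesgue)"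
  proof (rule nn_integral_mono)
    fix x
    have "(f x)\<^sup>2 \<le> B\<^sup>2"
      using assms(2)[of x] by (metis abs_ge_zero power2_abs power_mono)
    then show "ennreal ((f x)\<^sup>2) \<le> ennreal (B\<^sup>2) * indicator S x"
      using assms(3) by (cases "x \<in> S") (auto intro: ennreal_leI)
  qed
  also have "\<dots> = ennreal (B\<^sup>2) * emeasure lebesgue S"
    using assms(4) by (intro nn_integral_cmult_indicator fmeasurableD)
  also have "\<dots> < \<infinity>"
    using assms(4) by (simp add: fmeasurable_def ennreal_mult_less_top del: emeasure_completion)
  finally show ?thesis
    using assms(1) by (simp add: L2_space_def)
qed

lemma L2_norm_ge_measure:
  assumes "f \<in> L2_space" "A \<in> sets lebesgue" "0 \<le> c" "\<And>x. x \<in> A \<Longrightarrow> c \<le> \<bar>f x\<bar>"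
  shows "c * sqrt (measure lebesgue A) \<le> L2_norm f"
proof -
  define I where "I = (\<integral>\<^sup>+x. ennreal ((f x)\<^sup>2) \<partial>lebesgue)"
  have "ennreal (c\<^sup>2) * emeasure lebesgue A = (\<integral>\<^sup>+x. ennreal (c\<^sup>2) * indicator A x \<partial>lebesgue)"
    using assms(2) by (rule nn_integral_cmult_indicator[symmetric])
  also have "\<dots> \<le> I"
    unfolding I_def
  proof (rule nn_integral_mono)
    fix x
    have "c\<^sup>2 \<le> (f x)\<^sup>2" if "x \<in> A"
      using assms(3) assms(4)[OF that] by (metis power2_abs power_mono)
    then show "ennreal (c\<^sup>2) * indicator A x \<le> ennreal ((f x)\<^sup>2)"
      by (cases "x \<in> A") (auto intro: ennreal_leI)
  qed
  finally have "c\<^sup>2 * measure lebesgue A \<le> enn2real I"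
    using assms(1) by (auto simp: L2_space_def I_def measure_def enn2real_mult dest: enn2real_mono)
  then have "sqrt (c\<^sup>2 * measure lebesgue A) \<le> L2_norm f"
    by (simp add: L2_norm_def I_def)
  then show ?thesis
    using assms(3) by (simp add: real_sqrt_mult)
qed

lemma L2_dist_indicator_ge:
  fixes G :: "'a::euclidean_space set"
  assumes "compact G" "interior G = {}" "v \<in> C0_infty" "a \<le> 1"
    and "AE x in lebesgue. x \<notin> G \<longrightarrow> \<bar>v x\<bar> \<le> a"
  shows "(1 - a) * sqrt (measure lebesgue G) \<le> L2_norm (\<lambda>x. indicator G x - v x)"
proof (rule L2_norm_ge_measure)
  have cont: "continuous_on UNIV v"
    using assms(3) by (simp add: C0_infty_def smooth_fun_imp_continuous)
  have bound: "\<bar>v x\<bar> \<le> a" for x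
    using AE_le_off_nowhere_dense_imp_le[of G "\<lambda>x. \<bar>v x\<bar>"] assms(1,2,5) cont
    by (auto simp: compact_imp_closed intro: continuous_intros)
  show G: "G \<in> sets lebesgue"
    using assms(1) by (intro fmeasurableD lmeasurable_compact)
  define K where "K = closure {x. v x \<noteq> 0}"
  have "G \<union> K \<in> lmeasurable"
    using assms(1,3) unfolding K_def C0_infty_def by (intro lmeasurable_compact compact_Un) auto
  moreover have "{x. indicator G x - v x \<noteq> 0} \<subseteq> G \<union> K"
    using closure_subset[of "{x. v x \<noteq> 0}"] by (auto simp: K_def indicator_def)
  moreover have "\<bar>indicator G x - v x\<bar> \<le> 1 + a" for x :: 'a
    using bound[of x] by (auto simp: indicator_def)
  moreover have "(\<lambda>x. indicator G x - v x) \<in> borel_measurable lebesgue"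
    using G cont
    by (intro borel_measurable_diff borel_measurable_indicator continuous_imp_borel_measurable_lebesgue)
  ultimately show "(\<lambda>x. indicator G x - v x) \<in> L2_space"
    by (intro L2_space_if_bounded_finite_support) auto
  show "0 \<le> 1 - a"
    using assms(4) by simp
  show "1 - a \<le> \<bar>indicator G x - v x\<bar>" if "x \<in> G" for x
    using bound[of x] that by simp
qed

lemma indicator_in_L2_space_Linf_w:
  fixes G :: "'a::euclidean_space set"
  assumes "G \<in> lmeasurable" "w \<in> borel_measurable lebesgue" "\<And>x. x \<in> G \<Longrightarrow> \<bar>w x\<bar> \<le> 1"
  shows "indicator G \<in> L2_space" "Linf_w_norm w (indicator G) \<le> ereal 1"
    and "indicator G \<in> Linf_w w"
proof -
  have meas: "(indicator G :: 'a \<Rightarrow> real) \<in> borel_measurable lebesgue"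
    using assms(1) by (intro borel_measurable_indicator fmeasurableD)
  then show "indicator G \<in> L2_space"
    using assms(1) by (intro L2_space_if_bounded_finite_support[of _ 1 G]) (auto simp: indicator_def)
  show norm: "Linf_w_norm w (indicator G) \<le> ereal 1"
    using assms by (intro Linf_w_norm_le meas) (auto simp: indicator_def)
  show "indicator G \<in> Linf_w w"
    using meas norm by (auto simp: Linf_w_def)
qed

theorem theorem2p6:
  fixes G :: "'a::euclidean_space set" and wG :: "'a \<Rightarrow> real"
  assumes "compact G"
    and "emeasure lebesgue G > 0"
    and "interior G = {}"
    and "\<And>x. wG x = (if x \<in> G then 1 else 2)"
  shows "\<not> bounded_L2_approx (Linf_w wG) (Linf_w_norm wG)"
proof
  assume "bounded_L2_approx (Linf_w wG) (Linf_w_norm wG)"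
  have G: "G \<in> lmeasurable"
    using assms(1) by (rule lmeasurable_compact)
  have "wG = (\<lambda>x. 2 - indicator G x)"
    by (auto simp: assms(4))
  then have w_meas: "wG \<in> borel_measurable lebesgue"
    using G by (simp add: fmeasurableD)
  have u: "indicator G \<in> L2_space" "Linf_w_norm wG (indicator G) \<le> ereal 1"
    "indicator G \<in> Linf_w wG"
    using indicator_in_L2_space_Linf_w[OF G w_meas] by (auto simp: assms(4))
  obtain uj where C: "\<And>j. uj j \<in> C0_infty"
    and L: "(\<lambda>j. L2_norm (\<lambda>x. indicator G x - uj j x)) \<longlonglongrightarrow> 0"
    and LS: "limsup (\<lambda>j. Linf_w_norm wG (uj j)) \<le> Linf_w_norm wG (indicator G)"
    using \<open>bounded_L2_approx _ _\<close> u(1,3) unfolding bounded_L2_approx_def by force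
  have "limsup (\<lambda>j. Linf_w_norm wG (uj j)) < ereal (3/2)"
    by (rule le_less_trans[OF order.trans[OF LS u(2)]]) simp
  then have "eventually (\<lambda>j. Linf_w_norm wG (uj j) \<le> ereal (3/2)) sequentially"
    by (rule eventually_mono[OF Limsup_lessD]) auto
  then have "eventually (\<lambda>j. sqrt (measure lebesgue G) / 4 \<le> L2_norm (\<lambda>x. indicator G x - uj j x))
      sequentially"
  proof eventually_elim
    case (elim j)
    have "AE x in lebesgue. x \<notin> G \<longrightarrow> \<bar>uj j x\<bar> \<le> 3/4"
      using AE_le_Linf_w_norm[OF elim] by eventually_elim (auto simp: assms(4) abs_mult)
    then show ?case
      using L2_dist_indicator_ge[OF assms(1,3) C, of "3/4"] by simp
  qed
  then have "sqrt (measure lebesgue G) / 4 \<le> 0"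
    using L by (intro tendsto_lowerbound[OF L]) auto
  moreover have "measure lebesgue G > 0"
    using assms(2) G by (simp add: measure_def enn2real_positive_iff fmeasurable_def del: emeasure_completion)
  ultimately show False
    by simp
qed

end
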